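(* Let $W$ be a linear space over $\mathbb{K}\in\{\mathbb{R},\mathbb{C}\}$, let $0<q\le 1$, and let $V\neq\{0\}$ be a $W$-spreading $q$-space. Then the (algebraic) dimension of $V$ is at least $\mathfrak{c}$, the cardinality of the continuum.
   Context: For $0<q\le 1$, a $q$-norm on a linear space $X$ is a map $\|\cdot\|\colon X\to[0,\infty)$ with $\|x\|=0$ iff $x=0$, $\|\lambda x\|=|\lambda|\,\|x\|$, and $\|x+y\|^q\le\|x\|^q+\|y\|^q$; a $q$-Banach space is a space with a complete $q$-norm. $W^{\mathbb{N}}$ denotes the linear space of all $W$-valued sequences with coordinatewise operations. A $W$-spreading $q$-space is a linear subspace $V$ of $W^{\mathbb{N}}$ endowed with a complete $q$-norm $\|\cdot\|_V$ such that: whenever $(a_j)_{j=1}^\infty\in V$ and $\mathbb{N}_0=\{j_1<j_2<j_3<\cdots\}$ is an infinite subset of $\mathbb{N}$, the sequence $(b_k)_{k=1}^\infty$ defined by $b_k=a_i$ if $k=j_i$ and $b_k=0$ if $k\notin\mathbb{N}_0$ belongs to $V$ and satisfies $\|(b_k)_k\|_V\le\|(a_j)_j\|_V$. *)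

theory Defs
  imports Complex_Main "HOL-Library.Function_Algebras"
begin

text \<open>Addition, subtraction and zero on \<open>nat \<Rightarrow> 'w\<close> are the coordinatewise
  ones from Function_Algebras.\<close>
definition seq_scale :: "('k \<Rightarrow> 'w \<Rightarrow> 'w) \<Rightarrow> 'k \<Rightarrow> (nat \<Rightarrow> 'w) \<Rightarrow> (nat \<Rightarrow> 'w)" where
  "seq_scale s c x = (\<lambda>j. s c (x j))"

definition is_q_norm_on ::
  "('k::real_normed_field \<Rightarrow> 'v \<Rightarrow> 'v) \<Rightarrow> real \<Rightarrow> 'v::ab_group_add set \<Rightarrow> ('v \<Rightarrow> real) \<Rightarrow> bool" where
  "is_q_norm_on s q V nv \<longleftrightarrow>
     (\<forall>x\<in>V. nv x \<ge> 0) \<and>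
     (\<forall>x\<in>V. nv x = 0 \<longleftrightarrow> x = 0) \<and>
     (\<forall>x\<in>V. \<forall>c. nv (s c x) = norm c * nv x) \<and>
     (\<forall>x\<in>V. \<forall>y\<in>V. nv (x + y) powr q \<le> nv x powr q + nv y powr q)"

definition complete_wrt :: "'v::ab_group_add set \<Rightarrow> ('v \<Rightarrow> real) \<Rightarrow> bool" where
  "complete_wrt V nv \<longleftrightarrow>
     (\<forall>X :: nat \<Rightarrow> 'v. (\<forall>n. X n \<in> V) \<and>
        (\<forall>e>0. \<exists>N. \<forall>m\<ge>N. \<forall>n\<ge>N. nv (X m - X n) < e) \<longrightarrow>
        (\<exists>x\<in>V. (\<lambda>n. nv (X n - x)) \<longlonglongrightarrow> 0))"

text \<open>The spread of a sequence a along the strictly increasing enumeration g of an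
  infinite subset of N: b (g i) = a i, and b k = 0 for k outside the range of g.\<close>
definition spread :: "(nat \<Rightarrow> nat) \<Rightarrow> (nat \<Rightarrow> 'w::zero) \<Rightarrow> (nat \<Rightarrow> 'w)" where
  "spread g a = (\<lambda>k. if \<exists>i. g i = k then a (THE i. g i = k) else 0)"

definition spreading_q_space ::
  "('k::real_normed_field \<Rightarrow> 'w::ab_group_add \<Rightarrow> 'w) \<Rightarrow> real \<Rightarrow> (nat \<Rightarrow> 'w) set \<Rightarrow> ((nat \<Rightarrow> 'w) \<Rightarrow> real) \<Rightarrow> bool" where
  "spreading_q_space s q V nv \<longleftrightarrow>
     module.subspace (seq_scale s) V \<and>
     is_q_norm_on (seq_scale s) q V nv \<and>
     complete_wrt V nv \<and>
     (\<forall>a\<in>V. \<forall>g. strict_mono g \<longrightarrow> spread g a \<in> V \<and> nv (spread g a) \<le> nv a)"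

definition dim_ge_continuum :: "('k::field \<Rightarrow> 'v::ab_group_add \<Rightarrow> 'v) \<Rightarrow> 'v set \<Rightarrow> bool" where
  "dim_ge_continuum s V \<longleftrightarrow>
     (\<forall>B. B \<subseteq> V \<and> \<not> module.dependent s B \<and> module.span s B = V \<longrightarrow>
        (\<exists>f :: real \<Rightarrow> 'v. inj f \<and> range f \<subseteq> B))"

end

(*
  Normalise some a in V to nv a = 1 and spread it along the rows of the Cantor pairing.  The
  copies z_0, z_1, ... lie in V, and each z_n is outside the span of its predecessors, hence (the
  scalars being locally compact) at positive distance gap n from it, measured by rho = nv powr q.
  Choose weights w_n with w_(n+1) <= w_n * gap n / 4.  Then for every bounded scalar sequence d
  the series sum_j d_j w_j^(1/q) z_j converges, and its sum is nonzero whenever some d_n <> 0 has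
  maximal norm among d_n, d_(n+1), ...: the tail cannot cancel the n-th term.  Taking for d the
  indicators of continuum many almost disjoint subsets of the naturals gives continuum many
  linearly independent vectors of V, and every Hamel basis has the same cardinality as a basis
  extending them.
*)
theory Submission
  imports Defs "HOL-Analysis.Analysis" "HOL-Library.Nat_Bijection"
begin

section \<open>Almost disjoint families of natural numbers\<close>

text \<open>\<open>dyadic_code r n\<close> encodes \<open>n\<close> together with the \<open>n\<close>-th dyadic approximation of \<open>r\<close>,
  so the ranges for distinct reals form an almost disjoint family.\<close>
definition dyadic_code :: "real \<Rightarrow> nat \<Rightarrow> nat" where
  "dyadic_code r n = prod_encode (n, int_encode \<lfloor>2 ^ n * r\<rfloor>)"

lemma le_dyadic_code: "n \<le> dyadic_code r n"
  by (simp add: dyadic_code_def le_prod_encode_1)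

lemma eventually_floor_pow2_neq:
  fixes r r' :: real
  assumes "r \<noteq> r'"
  shows "\<exists>N. \<forall>n\<ge>N. \<lfloor>2 ^ n * r\<rfloor> \<noteq> \<lfloor>2 ^ n * r'\<rfloor>"
proof -
  obtain N where N: "1 / \<bar>r - r'\<bar> < 2 ^ N"
    using real_arch_pow[of 2 "1 / \<bar>r - r'\<bar>"] by auto
  have "\<lfloor>2 ^ n * r\<rfloor> \<noteq> \<lfloor>2 ^ n * r'\<rfloor>" if "N \<le> n" for n
  proof
    assume "\<lfloor>2 ^ n * r\<rfloor> = \<lfloor>2 ^ n * r'\<rfloor>"
    then have "\<bar>2 ^ n * r - 2 ^ n * r'\<bar> < 1"
      by linarith
    then have "2 ^ n * \<bar>r - r'\<bar> < 1"
      by (simp add: abs_mult right_diff_distrib[symmetric])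
    moreover have "(2::real) ^ N \<le> 2 ^ n"
      using that by (simp add: power_increasing)
    ultimately have "2 ^ N * \<bar>r - r'\<bar> < 1"
      by (meson abs_ge_zero le_less_trans mult_right_mono)
    then show False
      using N assms by (simp add: field_simps)
  qed
  then show ?thesis by blast
qed

lemma finite_range_dyadic_code_Int:
  assumes "r \<noteq> r'"
  shows "finite (range (dyadic_code r) \<inter> range (dyadic_code r'))"
proof -
  obtain N where N: "\<forall>n\<ge>N. \<lfloor>2 ^ n * r\<rfloor> \<noteq> \<lfloor>2 ^ n * r'\<rfloor>"
    using eventually_floor_pow2_neq[OF assms] by blast
  have "range (dyadic_code r) \<inter> range (dyadic_code r') \<subseteq> dyadic_code r ` {..<N}"
  proof clarify
    fix n m assume "dyadic_code r n = dyadic_code r' m"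
    then have "n = m" and "\<lfloor>2 ^ n * r\<rfloor> = \<lfloor>2 ^ n * r'\<rfloor>"
      by (auto simp: dyadic_code_def int_encode_eq)
    moreover from this N have "n < N"
      by (meson not_le)
    ultimately show "dyadic_code r n \<in> dyadic_code r ` {..<N}"
      by simp
  qed
  then show ?thesis
    by (rule finite_subset) auto
qed

lemma infinite_range_dyadic_code: "infinite (range (dyadic_code r))"
  unfolding infinite_nat_iff_unbounded_le using le_dyadic_code by blast

lemma finite_almost_disjoint_eventually_disjoint:
  assumes "finite R" and "\<And>r r'. r \<in> R \<Longrightarrow> r' \<in> R \<Longrightarrow> r \<noteq> r' \<Longrightarrow> finite (A r \<inter> A r')"
  obtains N :: nat
  where "\<And>j r r'. N \<le> j \<Longrightarrow> r \<in> R \<Longrightarrow> r' \<in> R \<Longrightarrow> j \<in> A r \<Longrightarrow> j \<in> A r' \<Longrightarrow> r' = r"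
proof -
  have "finite (\<Union>r\<in>R. \<Union>r'\<in>R - {r}. A r \<inter> A r')"
    using assms(1) by (intro finite_UN_I) (auto intro: assms(2))
  then obtain N where N: "(\<Union>r\<in>R. \<Union>r'\<in>R - {r}. A r \<inter> A r') \<subseteq> {..<N}"
    using finite_nat_bounded by blast
  show thesis
    by (rule that) (use N in \<open>fastforce simp: subset_iff not_le[symmetric]\<close>)
qed

lemma sum_of_bool_eq_single:
  fixes l :: "'r \<Rightarrow> 'a::semiring_1"
  assumes "finite R" "r \<in> R" "j \<in> A r" "\<And>r'. r' \<in> R \<Longrightarrow> j \<in> A r' \<Longrightarrow> r' = r"
  shows "(\<Sum>r'\<in>R. l r' * of_bool (j \<in> A r')) = l r"
proof -
  have "(\<Sum>r'\<in>R. l r' * of_bool (j \<in> A r')) = (\<Sum>r'\<in>R. if r' = r then l r else 0)"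
    using assms(3) by (intro sum.cong refl) (auto dest: assms(4))
  then show ?thesis
    using assms(1,2) by simp
qed

lemma almost_disjoint_combination_dominant_index:
  fixes l :: "'r \<Rightarrow> 'a::real_normed_field" and A :: "'r \<Rightarrow> nat set"
  assumes R: "finite R" and "r0 \<in> R" "l r0 \<noteq> 0"
    and infinite: "\<And>r. r \<in> R \<Longrightarrow> infinite (A r)"
    and almost_disjoint: "\<And>r r'. r \<in> R \<Longrightarrow> r' \<in> R \<Longrightarrow> r \<noteq> r' \<Longrightarrow> finite (A r \<inter> A r')"
  defines "d \<equiv> \<lambda>j. \<Sum>r\<in>R. l r * of_bool (j \<in> A r)"
  obtains n where "d n \<noteq> 0" and "\<And>j. n < j \<Longrightarrow> norm (d j) \<le> norm (d n)"
proof -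
  obtain N where N: "\<And>j r r'. N \<le> j \<Longrightarrow> r \<in> R \<Longrightarrow> r' \<in> R \<Longrightarrow> j \<in> A r \<Longrightarrow> j \<in> A r' \<Longrightarrow> r' = r"
    using finite_almost_disjoint_eventually_disjoint[of R A, OF R almost_disjoint] by blast
  have d_on: "d j = l r" if "N \<le> j" "r \<in> R" "j \<in> A r" for j r
    unfolding d_def
    by (rule sum_of_bool_eq_single[where A = A, OF R that(2,3)]) (use N[OF that(1,2) _ that(3)] in blast)
  have d_off: "d j = 0" if "\<forall>r\<in>R. j \<notin> A r" for j
    unfolding d_def using that by (intro sum.neutral) auto
  have "Max ((\<lambda>r. norm (l r)) ` R) \<in> (\<lambda>r. norm (l r)) ` R"
    using R \<open>r0 \<in> R\<close> by (intro Max_in) auto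
  then obtain r1 where "r1 \<in> R" and r1_max: "norm (l r1) = Max ((\<lambda>r. norm (l r)) ` R)"
    by (metis imageE)
  have max: "norm (l r) \<le> norm (l r1)" if "r \<in> R" for r
    unfolding r1_max using R that by (auto intro: Max_ge)
  obtain n where "N \<le> n" "n \<in> A r1"
    using infinite[OF \<open>r1 \<in> R\<close>] by (meson infinite_nat_iff_unbounded_le)
  then have dn: "d n = l r1"
    using d_on \<open>r1 \<in> R\<close> by blast
  show thesis
  proof (rule that)
    show "d n \<noteq> 0"
      using dn max[OF \<open>r0 \<in> R\<close>] \<open>l r0 \<noteq> 0\<close> by auto
    show "norm (d j) \<le> norm (d n)" if "n < j" for j
    proof (cases "\<exists>r\<in>R. j \<in> A r")
      case True
      then show ?thesis
        using d_on \<open>N \<le> n\<close> that max dn by (metis less_imp_le order.trans)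
    next
      case False
      then show ?thesis by (simp add: d_off)
    qed
  qed
qed

section \<open>Geometric tails and Hamel bases\<close>

lemma sum_halving_le:
  fixes e :: "nat \<Rightarrow> real"
  assumes nonneg: "\<And>k. 0 \<le> e k" and halving: "\<And>k. e (Suc k) \<le> e k / 2"
  shows "sum e {m..<M} \<le> 2 * e m"
proof (cases "m \<le> M")
  case True
  have "sum e {m..<M} \<le> 2 * e m - 2 * e M"
    using True
  proof (induction M rule: dec_induct)
    case (step n)
    have "sum e {m..<Suc n} = sum e {m..<n} + e n"
      using step.hyps by simp
    then show ?case
      using step.IH halving[of n] by linarith
  qed simp
  then show ?thesis using nonneg[of M] by linarith
next
  case False
  then show ?thesis using nonneg[of m] by simp
qed

context vector_space
begin

lemma independent_family:
  assumes "\<And>R l r. finite R \<Longrightarrow> (\<Sum>i\<in>R. scale (l i) (u i)) = 0 \<Longrightarrow> r \<in> R \<Longrightarrow> l r = 0"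
  shows "inj u" and "independent (range u)"
proof -
  show "inj u"
  proof (rule injI, rule ccontr)
    fix r r' assume "u r = u r'" "r \<noteq> r'"
    define l :: "_ \<Rightarrow> 'a" where "l i = (if i = r then 1 else - 1)" for i
    have "(\<Sum>i\<in>{r, r'}. scale (l i) (u i)) = 0"
      using \<open>u r = u r'\<close> \<open>r \<noteq> r'\<close> by (simp add: l_def scale_minus_left)
    then have "l r = 0"
      using assms[of "{r, r'}" l r] by simp
    then show False
      by (simp add: l_def)
  qed
  show "independent (range u)"
  proof
    assume "dependent (range u)"
    then obtain t c where t: "finite t" "t \<subseteq> range u" "(\<Sum>v\<in>t. scale (c v) v) = 0" "\<exists>v\<in>t. c v \<noteq> 0"
      unfolding dependent_explicit by blast
    have R: "finite (u -` t)"
      using t(1) \<open>inj u\<close> by (simp add: finite_vimageI)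
    have t_eq: "u ` (u -` t) = t"
      using t(2) by auto
    have "(\<Sum>i\<in>u -` t. scale (c (u i)) (u i)) = (\<Sum>v\<in>u ` (u -` t). scale (c v) v)"
      using \<open>inj u\<close> by (simp only: sum.reindex inj_on_subset[OF \<open>inj u\<close> subset_UNIV] o_def)
    then have "(\<Sum>i\<in>u -` t. scale (c (u i)) (u i)) = 0"
      using t(3) by (simp only: t_eq)
    then have "\<forall>i\<in>u -` t. c (u i) = 0"
      using assms[OF R, of "\<lambda>i. c (u i)"] by blast
    then show False
      using t(4) t(2) by blast
  qed
qed

lemma dim_ge_continuum_if_independent_family:
  fixes u :: "real \<Rightarrow> 'b"
  assumes "subspace V" "range u \<subseteq> V" "inj u" "independent (range u)"
  shows "dim_ge_continuum scale V"
  unfolding dim_ge_continuum_def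
proof (intro allI impI, elim conjE)
  fix B assume B: "B \<subseteq> V" "independent B" "span B = V"
  obtain C where C: "range u \<subseteq> C" "C \<subseteq> V" "independent C" "V \<subseteq> span C"
    using maximal_independent_subset_extend[OF assms(2,4)] by blast
  have "span C = span B"
    using C B span_minimal[OF C(2) assms(1)] by auto
  then obtain f where f: "bij_betw f C B"
    using bij_if_span_eq_span_bases C(3) B(2) by blast
  show "\<exists>g :: real \<Rightarrow> 'b. inj g \<and> range g \<subseteq> B"
  proof (intro exI conjI)
    show "inj (f \<circ> u)"
      using comp_inj_on[OF assms(3) inj_on_subset[OF bij_betw_imp_inj_on[OF f] C(1)]] .
    show "range (f \<circ> u) \<subseteq> B"
      using bij_betw_imp_surj_on[OF f] C(1) by auto
  qed
qed

end

section \<open>Complete q-normed spaces\<close>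

locale complete_q_normed = vector_space scale
  for scale :: "'k::{real_normed_field,heine_borel} \<Rightarrow> 'v::ab_group_add \<Rightarrow> 'v" +
  fixes q :: real and V :: "'v set" and nv :: "'v \<Rightarrow> real"
  assumes q_pos: "0 < q"
    and subspace_V: "subspace V"
    and q_norm: "is_q_norm_on scale q V nv"
    and complete: "complete_wrt V nv"
begin

definition rho :: "'v \<Rightarrow> real" where
  "rho x = nv x powr q"

lemma V_add: "x \<in> V \<Longrightarrow> y \<in> V \<Longrightarrow> x + y \<in> V"
  using subspace_V subspace_add by blast

lemma V_diff: "x \<in> V \<Longrightarrow> y \<in> V \<Longrightarrow> x - y \<in> V"
  using subspace_V subspace_diff by blast

lemma V_scale: "x \<in> V \<Longrightarrow> scale c x \<in> V"
  using subspace_V subspace_scale by blast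

lemma V_sum: "(\<And>i. i \<in> I \<Longrightarrow> f i \<in> V) \<Longrightarrow> sum f I \<in> V"
  using subspace_V subspace_sum by blast

lemma span_subset_V: "S \<subseteq> V \<Longrightarrow> span S \<subseteq> V"
  using subspace_V span_minimal by blast

lemma nv_nonneg: "x \<in> V \<Longrightarrow> 0 \<le> nv x"
  using q_norm by (simp add: is_q_norm_on_def)

lemma nv_eq_0_iff: "x \<in> V \<Longrightarrow> nv x = 0 \<longleftrightarrow> x = 0"
  using q_norm by (simp add: is_q_norm_on_def)

lemma nv_scale: "x \<in> V \<Longrightarrow> nv (scale c x) = norm c * nv x"
  using q_norm by (simp add: is_q_norm_on_def)

lemma rho_nonneg: "0 \<le> rho x"
  by (simp add: rho_def)

lemma rho_pos: "x \<in> V \<Longrightarrow> x \<noteq> 0 \<Longrightarrow> 0 < rho x"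
  using nv_eq_0_iff nv_nonneg by (simp add: rho_def)

lemma rho_0: "rho 0 = 0"
  using nv_eq_0_iff subspace_0[OF subspace_V] by (simp add: rho_def)

lemma rho_add: "x \<in> V \<Longrightarrow> y \<in> V \<Longrightarrow> rho (x + y) \<le> rho x + rho y"
  using q_norm by (simp add: is_q_norm_on_def rho_def)

lemma rho_scale: "x \<in> V \<Longrightarrow> rho (scale c x) = norm c powr q * rho x"
  using nv_scale nv_nonneg by (simp add: rho_def powr_mult)

lemma rho_minus: "x \<in> V \<Longrightarrow> rho (- x) = rho x"
  using rho_scale[of x "- 1"] by (simp add: scale_minus_left)

lemma rho_minus_commute: "x \<in> V \<Longrightarrow> y \<in> V \<Longrightarrow> rho (x - y) = rho (y - x)"
  using rho_minus[OF V_diff, of y x] by simp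

lemma rho_diff_le: "x \<in> V \<Longrightarrow> y \<in> V \<Longrightarrow> rho (x - y) \<le> rho x + rho y"
  using rho_add[of x "- y"] rho_minus[of y] subspace_neg[OF subspace_V, of y] by simp

lemma rho_sum_le:
  assumes "finite I" "\<And>i. i \<in> I \<Longrightarrow> f i \<in> V"
  shows "rho (sum f I) \<le> (\<Sum>i\<in>I. rho (f i))"
  using assms
proof (induction I rule: finite_induct)
  case empty
  then show ?case by (simp add: rho_0)
next
  case (insert i I)
  then have "rho (sum f (insert i I)) \<le> rho (f i) + rho (sum f I)"
    by (simp add: rho_add V_sum)
  then show ?case
    using insert by simp
qed

lemma complete_rho:
  assumes X: "\<And>n. X n \<in> V"
    and Cauchy: "\<And>e. 0 < e \<Longrightarrow> \<exists>N. \<forall>m\<ge>N. \<forall>n\<ge>N. rho (X m - X n) < e"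
  shows "\<exists>x\<in>V. (\<lambda>n. rho (X n - x)) \<longlonglongrightarrow> 0"
proof -
  have "\<exists>N. \<forall>m\<ge>N. \<forall>n\<ge>N. nv (X m - X n) < e" if "0 < e" for e
  proof -
    obtain N where N: "\<forall>m\<ge>N. \<forall>n\<ge>N. rho (X m - X n) < e powr q"
      using Cauchy[of "e powr q"] \<open>0 < e\<close> by auto
    have "nv (X m - X n) < e" if "N \<le> m" "N \<le> n" for m n
    proof (rule ccontr)
      assume "\<not> nv (X m - X n) < e"
      then have "e powr q \<le> rho (X m - X n)"
        unfolding rho_def using \<open>0 < e\<close> q_pos by (intro powr_mono2) auto
      then show False
        using N that by fastforce
    qed
    then show ?thesis by blast
  qed
  then obtain x where x: "x \<in> V" "(\<lambda>n. nv (X n - x)) \<longlonglongrightarrow> 0"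
    using complete X unfolding complete_wrt_def by blast
  have "(\<lambda>n. nv (X n - x) powr q) \<longlonglongrightarrow> 0"
    by (rule tendsto_zero_powrI[OF x(2) tendsto_const]) (use q_pos nv_nonneg X x(1) V_diff in auto)
  then show ?thesis
    using x(1) by (auto simp: rho_def)
qed

lemma summable_rho_imp_converges:
  assumes X: "\<And>j. x j \<in> V" and summable: "summable (\<lambda>j. rho (x j))"
  shows "\<exists>y\<in>V. (\<lambda>N. rho ((\<Sum>j<N. x j) - y)) \<longlonglongrightarrow> 0"
proof (rule complete_rho)
  show "(\<Sum>j<N. x j) \<in> V" for N
    using X by (intro V_sum)
  have tail: "rho ((\<Sum>j<m. x j) - (\<Sum>j<n. x j)) \<le> (\<Sum>j\<in>{n..<m}. rho (x j))" if "n \<le> m" for m n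
  proof -
    have "(\<Sum>j<m. x j) - (\<Sum>j<n. x j) = (\<Sum>j\<in>{n..<m}. x j)"
      using that by (simp add: sum_diff[symmetric] lessThan_minus_lessThan)
    then show ?thesis
      using X by (simp add: rho_sum_le)
  qed
  fix e :: real assume "0 < e"
  with summable obtain N where "\<forall>n\<ge>N. \<forall>m. norm (\<Sum>j\<in>{n..<m}. rho (x j)) < e"
    unfolding summable_Cauchy by blast
  then have N: "(\<Sum>j\<in>{n..<m}. rho (x j)) < e" if "N \<le> n" for n m
    using that by (simp add: rho_nonneg sum_nonneg)
  have small: "rho ((\<Sum>j<m. x j) - (\<Sum>j<n. x j)) < e" if "N \<le> n" "n \<le> m" for m n
    using tail[OF that(2)] N[OF that(1), of m] by linarith
  show "\<exists>N. \<forall>m\<ge>N. \<forall>n\<ge>N. rho ((\<Sum>j<m. x j) - (\<Sum>j<n. x j)) < e"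
  proof (intro exI allI impI)
    fix m n assume "N \<le> m" "N \<le> n"
    then show "rho ((\<Sum>j<m. x j) - (\<Sum>j<n. x j)) < e"
      using small[of n m] small[of m n] rho_minus_commute[OF V_sum V_sum, of _ x _ x] X
      by (cases "n \<le> m") auto
  qed
qed

definition rho_closed :: "'v set \<Rightarrow> bool" where
  "rho_closed A \<longleftrightarrow>
     (\<forall>f x. range f \<subseteq> A \<and> x \<in> V \<and> (\<lambda>n. rho (x - f n)) \<longlonglongrightarrow> 0 \<longrightarrow> x \<in> A)"

lemma rho_closedD:
  "rho_closed A \<Longrightarrow> (\<And>n. f n \<in> A) \<Longrightarrow> x \<in> V \<Longrightarrow> (\<lambda>n. rho (x - f n)) \<longlonglongrightarrow> 0 \<Longrightarrow> x \<in> A"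
  unfolding rho_closed_def by blast

lemma rho_closed_dist_pos:
  assumes "rho_closed A" "x \<in> V" "x \<notin> A"
  shows "\<exists>\<delta>>0. \<forall>f\<in>A. \<delta> \<le> rho (x - f)"
proof (rule ccontr)
  assume "\<not> ?thesis"
  then have "\<forall>n. \<exists>f\<in>A. rho (x - f) < inverse (Suc n)"
    by (metis inverse_positive_iff_positive not_le of_nat_0_less_iff zero_less_Suc)
  then obtain f where f: "\<And>n. f n \<in> A" "\<And>n. rho (x - f n) < inverse (Suc n)"
    by metis
  have "(\<lambda>n. rho (x - f n)) \<longlonglongrightarrow> 0"
    by (rule Lim_null_comparison[OF _ LIMSEQ_inverse_real_of_nat])
      (use f(2) in \<open>auto simp: rho_nonneg less_imp_le\<close>)
  then have "x \<in> A"
    by (rule rho_closedD[OF assms(1), of f, OF f(1) assms(2)])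
  with assms(3) show False ..
qed

lemma rho_scale_add_ge:
  assumes dist: "\<forall>g\<in>span S. \<eta> \<le> rho (y - g)" and "0 \<le> \<eta>"
    and "S \<subseteq> V" "y \<in> V" "g \<in> span S"
  shows "norm c powr q * \<eta> \<le> rho (scale c y + g)"
proof (cases "c = 0")
  case True
  then show ?thesis by (simp add: rho_nonneg)
next
  case False
  let ?g' = "- scale (inverse c) g"
  have g': "?g' \<in> span S"
    by (simp add: span_neg span_scale assms(5))
  have "?g' \<in> V"
    using g' span_subset_V[OF assms(3)] by blast
  have "\<eta> \<le> rho (y - ?g')"
    using dist g' by blast
  then have "norm c powr q * \<eta> \<le> norm c powr q * rho (y - ?g')"
    by (rule mult_left_mono) simp
  also have "\<dots> = rho (scale c (y - ?g'))"
    by (rule rho_scale[OF V_diff[OF assms(4) \<open>?g' \<in> V\<close>], symmetric])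
  also have "scale c (y - ?g') = scale c y + g"
    using False by (simp add: scale_right_distrib)
  finally show ?thesis .
qed

lemma norm_le_if_rho_diff_le:
  assumes dist: "\<forall>g\<in>span S. \<eta> \<le> rho (y - g)" and "0 < \<eta>"
    and "S \<subseteq> V" "y \<in> V" "x \<in> V" "g \<in> span S"
    and K: "rho (x - (scale c y + g)) \<le> K"
  shows "norm c \<le> ((rho x + K) / \<eta>) powr (1/q)"
proof -
  have "scale c y + g \<in> V"
    using assms(3-6) span_subset_V by (blast intro: V_add V_scale)
  have "norm c powr q * \<eta> \<le> rho (scale c y + g)"
    using assms(2-6) dist by (intro rho_scale_add_ge) auto
  also have "\<dots> \<le> rho x + rho (x - (scale c y + g))"
    using rho_diff_le[OF \<open>x \<in> V\<close> V_diff[OF \<open>x \<in> V\<close> \<open>scale c y + g \<in> V\<close>]]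
    by (simp only: diff_diff_eq2 add_diff_cancel_left')
  also have "\<dots> \<le> rho x + K"
    using K by simp
  finally have "norm c powr q \<le> (rho x + K) / \<eta>"
    using \<open>0 < \<eta>\<close> by (simp add: pos_le_divide_eq)
  then have "(norm c powr q) powr (1/q) \<le> ((rho x + K) / \<eta>) powr (1/q)"
    using q_pos by (intro powr_mono2) auto
  then show ?thesis
    using q_pos by (simp add: powr_powr)
qed

lemma rho_tendsto_coeff_limit:
  assumes "x \<in> V" "y \<in> V" "\<And>n. g n \<in> V"
    and lim: "(\<lambda>n. rho (x - (scale (c n) y + g n))) \<longlonglongrightarrow> 0" and "c \<longlonglongrightarrow> l"
  shows "(\<lambda>n. rho (x - scale l y - g n)) \<longlonglongrightarrow> 0"
proof (rule Lim_null_comparison)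
  have "rho (x - scale l y - g n) \<le> rho (x - (scale (c n) y + g n)) + norm (c n - l) powr q * rho y"
    for n
  proof -
    have "x - scale l y - g n = (x - (scale (c n) y + g n)) + scale (c n - l) y"
      by (simp add: scale_left_diff_distrib)
    then have "rho (x - scale l y - g n) = rho ((x - (scale (c n) y + g n)) + scale (c n - l) y)"
      by (simp only:)
    also have "\<dots> \<le> rho (x - (scale (c n) y + g n)) + rho (scale (c n - l) y)"
      using assms(1-3) by (intro rho_add V_diff V_scale V_add)
    finally show ?thesis
      by (simp add: rho_scale \<open>y \<in> V\<close>)
  qed
  then show "\<forall>\<^sub>F n in sequentially. norm (rho (x - scale l y - g n))
      \<le> rho (x - (scale (c n) y + g n)) + norm (c n - l) powr q * rho y"
    by (simp add: rho_nonneg)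
  have "(\<lambda>n. norm (c n - l) powr q) \<longlonglongrightarrow> 0"
    using \<open>c \<longlonglongrightarrow> l\<close> q_pos by (intro tendsto_zero_powrI) (auto simp: tendsto_norm_zero LIM_zero)
  then show "(\<lambda>n. rho (x - (scale (c n) y + g n)) + norm (c n - l) powr q * rho y) \<longlonglongrightarrow> 0"
    using lim by (intro tendsto_add_zero tendsto_mult_left_zero)
qed

text \<open>The coefficients of \<open>y\<close> stay bounded because \<open>y\<close> keeps a positive distance from
  \<open>span S\<close>; a convergent subsequence of them reduces the claim to the closedness of
  \<open>span S\<close>.\<close>
lemma rho_closed_span_insert:
  assumes closed: "rho_closed (span S)" and "S \<subseteq> V" "y \<in> V"
  shows "rho_closed (span (insert y S))"
proof (cases "y \<in> span S")
  case True
  then show ?thesis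
    using closed by (simp add: span_redundant)
next
  case False
  obtain \<eta> where \<eta>: "0 < \<eta>" "\<forall>g\<in>span S. \<eta> \<le> rho (y - g)"
    using rho_closed_dist_pos[OF closed \<open>y \<in> V\<close> False] by blast
  show ?thesis
    unfolding rho_closed_def
  proof (intro allI impI, elim conjE)
    fix f x
    assume f: "range f \<subseteq> span (insert y S)" and "x \<in> V" and lim: "(\<lambda>n. rho (x - f n)) \<longlonglongrightarrow> 0"
    have "\<forall>n. \<exists>c. f n - scale c y \<in> span S"
      using f span_breakdown_eq by blast
    then obtain c where c: "\<And>n. f n - scale (c n) y \<in> span S"
      by metis
    define g where "g n = f n - scale (c n) y" for n
    have g: "g n \<in> span S" and f_eq: "f n = scale (c n) y + g n" for n
      using c by (simp_all add: g_def)
    have gV: "g n \<in> V" for n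
      using g span_subset_V[OF assms(2)] by blast
    obtain K where "\<forall>n. norm (rho (x - f n)) \<le> K"
      using convergent_imp_Bseq[OF convergentI[OF lim]] BseqE by metis
    then have K: "rho (x - f n) \<le> K" for n
      by (simp add: abs_le_iff)
    have "norm (c n) \<le> ((rho x + K) / \<eta>) powr (1/q)" for n
      using norm_le_if_rho_diff_le[OF \<eta>(2,1) assms(2,3) \<open>x \<in> V\<close> g[of n] K[of n, unfolded f_eq]] .
    then have "bounded (range c)"
      unfolding bounded_iff by blast
    then obtain l r where r: "strict_mono r" and cl: "(c \<circ> r) \<longlonglongrightarrow> l"
      using bounded_imp_convergent_subsequence by blast
    have "(\<lambda>n. rho (x - scale l y - g (r n))) \<longlonglongrightarrow> 0"
      using rho_tendsto_coeff_limit[OF \<open>x \<in> V\<close> \<open>y \<in> V\<close> gV] LIMSEQ_subseq_LIMSEQ[OF lim r] cl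
      by (simp add: f_eq o_def)
    moreover have "x - scale l y \<in> V"
      using \<open>x \<in> V\<close> \<open>y \<in> V\<close> by (intro V_diff V_scale)
    ultimately have "x - scale l y \<in> span S"
      using rho_closedD[OF closed, of "\<lambda>n. g (r n)"] g by blast
    then show "x \<in> span (insert y S)"
      using span_breakdown_eq[of x y S] by blast
  qed
qed

lemma rho_closed_span:
  assumes "finite S" "S \<subseteq> V"
  shows "rho_closed (span S)"
  using assms
proof (induction S rule: finite_induct)
  case empty
  show ?case
    unfolding rho_closed_def span_empty
  proof (intro allI impI, elim conjE)
    fix f x assume "range f \<subseteq> {0}" "x \<in> V" "(\<lambda>n. rho (x - f n)) \<longlonglongrightarrow> 0"
    then have "rho x = 0"
      by (simp add: image_subset_iff LIMSEQ_const_iff)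
    then show "x \<in> {0}"
      using rho_pos[OF \<open>x \<in> V\<close>] by fastforce
  qed
next
  case (insert y S)
  then show ?case
    by (simp add: rho_closed_span_insert)
qed

lemma rho_dist_span_pos:
  assumes "finite S" "S \<subseteq> V" "x \<in> V" "x \<notin> span S"
  shows "\<exists>\<delta>>0. \<forall>f\<in>span S. \<delta> \<le> rho (x - f)"
  using rho_closed_dist_pos[OF rho_closed_span[OF assms(1,2)] assms(3,4)] .

end

section \<open>Continuum many independent vectors from an independent sequence\<close>

locale independent_seq_in_complete_q_normed = complete_q_normed scale q V nv
  for scale :: "'k::{real_normed_field,heine_borel} \<Rightarrow> 'v::ab_group_add \<Rightarrow> 'v" and q V nv +
  fixes z :: "nat \<Rightarrow> 'v"
  assumes z_in_V: "z m \<in> V"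
    and z_notin_span: "z m \<notin> span (z ` {..<m})"
    and nv_z_le_1: "nv (z m) \<le> 1"
begin

definition gap :: "nat \<Rightarrow> real" where
  "gap n = (SOME \<delta>. 0 < \<delta> \<and> (\<forall>f\<in>span (z ` {..<n}). \<delta> \<le> rho (z n - f)))"

text \<open>The factor \<open>gap n / 4\<close> makes the tail after the \<open>n\<close>-th term too small to cancel
  it; see \<open>weighted_sum_not_null\<close>.\<close>
definition weight :: "nat \<Rightarrow> real" where
  "weight n = (\<Prod>i<n. min (1/2) (gap i / 4))"

definition coeff :: "nat \<Rightarrow> 'k" where
  "coeff n = of_real (weight n powr (1/q))"

definition weighted_sum :: "(nat \<Rightarrow> 'k) \<Rightarrow> nat \<Rightarrow> 'v" where
  "weighted_sum d N = (\<Sum>j<N. scale (d j * coeff j) (z j))"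

lemma gap: "0 < gap n \<and> (\<forall>f\<in>span (z ` {..<n}). gap n \<le> rho (z n - f))"
  unfolding gap_def
  by (rule someI_ex, rule rho_dist_span_pos) (use z_in_V z_notin_span in auto)

lemma weight_pos: "0 < weight n"
  using gap by (simp add: weight_def prod_pos)

lemma weight_Suc: "weight (Suc n) = weight n * min (1/2) (gap n / 4)"
  by (simp add: weight_def)

lemma weight_Suc_le_half: "weight (Suc n) \<le> weight n / 2"
  using weight_pos[of n] by (simp add: weight_Suc mult_left_mono)

lemma weight_le_power: "weight n \<le> (1/2) ^ n"
proof (induction n)
  case 0
  then show ?case by (simp add: weight_def)
next
  case (Suc n)
  then show ?case using weight_Suc_le_half[of n] by simp
qed

lemma norm_coeff_powr: "norm (coeff n) powr q = weight n"
  using weight_pos[of n] q_pos by (simp add: coeff_def powr_powr)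

lemma rho_term_le:
  assumes "norm (d j) \<le> L"
  shows "rho (scale (d j * coeff j) (z j)) \<le> L powr q * weight j"
proof -
  have "rho (z j) \<le> 1"
    using nv_z_le_1[of j] nv_nonneg[OF z_in_V] q_pos by (simp add: rho_def powr_le1)
  then have "norm (d j) powr q * weight j * rho (z j) \<le> L powr q * weight j * 1"
    using assms q_pos weight_pos[of j] by (intro mult_mono powr_mono2) (auto simp: rho_nonneg)
  then show ?thesis
    by (simp add: rho_scale z_in_V norm_mult powr_mult norm_coeff_powr)
qed

lemma rho_tail_le:
  assumes "\<And>j. m \<le> j \<Longrightarrow> norm (d j) \<le> L"
  shows "rho (\<Sum>j\<in>{m..<M}. scale (d j * coeff j) (z j)) \<le> 2 * L powr q * weight m"
proof -
  have "rho (\<Sum>j\<in>{m..<M}. scale (d j * coeff j) (z j))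
      \<le> (\<Sum>j\<in>{m..<M}. rho (scale (d j * coeff j) (z j)))"
    by (rule rho_sum_le) (simp_all add: V_scale z_in_V)
  also have "\<dots> \<le> (\<Sum>j\<in>{m..<M}. L powr q * weight j)"
    by (intro sum_mono rho_term_le assms) simp
  also have "\<dots> = L powr q * sum weight {m..<M}"
    by (simp add: sum_distrib_left)
  also have "\<dots> \<le> L powr q * (2 * weight m)"
    using sum_halving_le[of weight m M] weight_pos weight_Suc_le_half
    by (intro mult_left_mono) (auto simp: less_imp_le)
  finally show ?thesis
    by simp
qed

lemma weighted_sum_in_V: "weighted_sum d N \<in> V"
  unfolding weighted_sum_def by (intro V_sum V_scale z_in_V)

lemma weighted_sum_add_tail:
  "N \<le> M \<Longrightarrow> weighted_sum d M = weighted_sum d N + (\<Sum>j\<in>{N..<M}. scale (d j * coeff j) (z j))"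
  unfolding weighted_sum_def by (simp add: lessThan_atLeast0 sum.atLeastLessThan_concat)

lemma weighted_sum_converges:
  assumes "\<And>j. norm (d j) \<le> L"
  shows "\<exists>x\<in>V. (\<lambda>N. rho (weighted_sum d N - x)) \<longlonglongrightarrow> 0"
  unfolding weighted_sum_def
proof (rule summable_rho_imp_converges)
  show "scale (d j * coeff j) (z j) \<in> V" for j
    by (intro V_scale z_in_V)
  have "summable (\<lambda>j. L powr q * (1/2::real) ^ j)"
    by (intro summable_mult summable_geometric) simp
  moreover have "norm (rho (scale (d j * coeff j) (z j))) \<le> L powr q * (1/2) ^ j" for j
    using rho_term_le[of d j L, OF assms] mult_left_mono[OF weight_le_power[of j] powr_ge_zero[of L q]]
    by (simp add: rho_nonneg)
  ultimately show "summable (\<lambda>j. rho (scale (d j * coeff j) (z j)))"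
    by (rule summable_comparison_test')
qed

lemma rho_weighted_sum_Suc_ge:
  "norm (d n) powr q * weight n * gap n \<le> rho (weighted_sum d (Suc n))"
proof -
  have "weighted_sum d n \<in> span (z ` {..<n})"
    unfolding weighted_sum_def by (intro span_sum span_scale span_base) auto
  then have "norm (d n * coeff n) powr q * gap n \<le> rho (scale (d n * coeff n) (z n) + weighted_sum d n)"
    using gap[of n] z_in_V by (intro rho_scale_add_ge) (auto simp: less_imp_le)
  then show ?thesis
    by (simp add: weighted_sum_def norm_mult powr_mult norm_coeff_powr add.commute)
qed

lemma weighted_sum_not_null:
  assumes "d n \<noteq> 0" and dominated: "\<And>j. n < j \<Longrightarrow> norm (d j) \<le> norm (d n)"
  shows "\<not> (\<lambda>N. rho (weighted_sum d N)) \<longlonglongrightarrow> 0"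
proof
  assume lim: "(\<lambda>N. rho (weighted_sum d N)) \<longlonglongrightarrow> 0"
  define K where "K = norm (d n) powr q * weight n * gap n"
  have "0 < K"
    using assms(1) weight_pos gap by (simp add: K_def)
  have "K / 2 \<le> rho (weighted_sum d N)" if "Suc n \<le> N" for N
  proof -
    let ?tail = "\<Sum>j\<in>{Suc n..<N}. scale (d j * coeff j) (z j)"
    have "rho ?tail \<le> 2 * norm (d n) powr q * weight (Suc n)"
      using dominated by (intro rho_tail_le) auto
    also have "\<dots> = (2 * norm (d n) powr q * weight n) * min (1/2) (gap n / 4)"
      by (simp add: weight_Suc)
    also have "\<dots> \<le> (2 * norm (d n) powr q * weight n) * (gap n / 4)"
      using weight_pos[of n] by (intro mult_left_mono) auto
    also have "\<dots> = K / 2"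
      by (simp add: K_def)
    finally have "rho ?tail \<le> K / 2" .
    moreover have "K \<le> rho (weighted_sum d N - ?tail)"
      using rho_weighted_sum_Suc_ge[of d n] weighted_sum_add_tail[OF that, of d] by (simp add: K_def)
    moreover have "rho (weighted_sum d N - ?tail) \<le> rho (weighted_sum d N) + rho ?tail"
      by (intro rho_diff_le weighted_sum_in_V V_sum V_scale z_in_V)
    ultimately show ?thesis
      by linarith
  qed
  moreover have "\<forall>\<^sub>F N in sequentially. rho (weighted_sum d N) < K / 2"
    using lim \<open>0 < K\<close> by (intro order_tendstoD(2)) auto
  then obtain N0 where "\<And>N. N0 \<le> N \<Longrightarrow> rho (weighted_sum d N) < K / 2"
    by (auto simp: eventually_sequentially)
  ultimately show False
    using max.cobounded1 max.cobounded2 not_le by metis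
qed

definition mark :: "real \<Rightarrow> nat \<Rightarrow> 'k" where
  "mark r j = of_bool (j \<in> range (dyadic_code r))"

definition family :: "real \<Rightarrow> 'v" where
  "family r = (SOME x. x \<in> V \<and> (\<lambda>N. rho (weighted_sum (mark r) N - x)) \<longlonglongrightarrow> 0)"

lemma family: "family r \<in> V \<and> (\<lambda>N. rho (weighted_sum (mark r) N - family r)) \<longlonglongrightarrow> 0"
proof -
  have "norm (mark r j) \<le> 1" for j
    by (cases "j \<in> range (dyadic_code r)") (simp_all add: mark_def)
  then have "\<exists>x. x \<in> V \<and> (\<lambda>N. rho (weighted_sum (mark r) N - x)) \<longlonglongrightarrow> 0"
    using weighted_sum_converges by blast
  then show ?thesis
    unfolding family_def by (rule someI_ex)
qed

lemma weighted_sum_linear: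
  assumes "finite R"
  shows "weighted_sum (\<lambda>j. \<Sum>r\<in>R. l r * d r j) N = (\<Sum>r\<in>R. scale (l r) (weighted_sum (d r) N))"
proof -
  have "weighted_sum (\<lambda>j. \<Sum>r\<in>R. l r * d r j) N
      = (\<Sum>j<N. \<Sum>r\<in>R. scale (l r) (scale (d r j * coeff j) (z j)))"
    unfolding weighted_sum_def by (simp add: sum_distrib_right scale_sum_left mult.assoc)
  also have "\<dots> = (\<Sum>r\<in>R. \<Sum>j<N. scale (l r) (scale (d r j * coeff j) (z j)))"
    by (rule sum.swap)
  also have "\<dots> = (\<Sum>r\<in>R. scale (l r) (weighted_sum (d r) N))"
    unfolding weighted_sum_def by (simp add: scale_sum_right)
  finally show ?thesis .
qed

lemma weighted_sum_combination_tendsto: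
  assumes R: "finite R" and x: "\<And>r. r \<in> R \<Longrightarrow> x r \<in> V"
    and lim: "\<And>r. r \<in> R \<Longrightarrow> (\<lambda>N. rho (weighted_sum (d r) N - x r)) \<longlonglongrightarrow> 0"
  shows "(\<lambda>N. rho (weighted_sum (\<lambda>j. \<Sum>r\<in>R. l r * d r j) N - (\<Sum>r\<in>R. scale (l r) (x r))))
           \<longlonglongrightarrow> 0"
proof (rule Lim_null_comparison)
  have "rho (weighted_sum (\<lambda>j. \<Sum>r\<in>R. l r * d r j) N - (\<Sum>r\<in>R. scale (l r) (x r)))
      \<le> (\<Sum>r\<in>R. norm (l r) powr q * rho (weighted_sum (d r) N - x r))" for N
  proof -
    have "weighted_sum (\<lambda>j. \<Sum>r\<in>R. l r * d r j) N - (\<Sum>r\<in>R. scale (l r) (x r))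
        = (\<Sum>r\<in>R. scale (l r) (weighted_sum (d r) N - x r))"
      by (simp add: weighted_sum_linear[OF R] sum_subtractf scale_right_diff_distrib)
    also have "rho \<dots> \<le> (\<Sum>r\<in>R. rho (scale (l r) (weighted_sum (d r) N - x r)))"
      using R x by (intro rho_sum_le V_scale V_diff weighted_sum_in_V)
    also have "\<dots> = (\<Sum>r\<in>R. norm (l r) powr q * rho (weighted_sum (d r) N - x r))"
      using x by (intro sum.cong refl rho_scale V_diff weighted_sum_in_V)
    finally show ?thesis .
  qed
  then show "\<forall>\<^sub>F N in sequentially.
      norm (rho (weighted_sum (\<lambda>j. \<Sum>r\<in>R. l r * d r j) N - (\<Sum>r\<in>R. scale (l r) (x r))))
        \<le> (\<Sum>r\<in>R. norm (l r) powr q * rho (weighted_sum (d r) N - x r))"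
    by (simp add: rho_nonneg)
  show "(\<lambda>N. \<Sum>r\<in>R. norm (l r) powr q * rho (weighted_sum (d r) N - x r)) \<longlonglongrightarrow> 0"
    using lim by (intro tendsto_null_sum tendsto_mult_right_zero)
qed

lemma family_independent:
  assumes R: "finite R" and combination: "(\<Sum>r\<in>R. scale (l r) (family r)) = 0" and "r0 \<in> R"
  shows "l r0 = 0"
proof (rule ccontr)
  assume "l r0 \<noteq> 0"
  define d where "d j = (\<Sum>r\<in>R. l r * mark r j)" for j
  have "(\<lambda>N. rho (weighted_sum d N - (\<Sum>r\<in>R. scale (l r) (family r)))) \<longlonglongrightarrow> 0"
    unfolding d_def[abs_def] by (intro weighted_sum_combination_tendsto[OF R]) (use family in blast)+
  then have "(\<lambda>N. rho (weighted_sum d N)) \<longlonglongrightarrow> 0"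
    by (simp only: combination diff_zero)
  moreover obtain n where "d n \<noteq> 0" "\<And>j. n < j \<Longrightarrow> norm (d j) \<le> norm (d n)"
    using almost_disjoint_combination_dominant_index[of R r0 l "\<lambda>r. range (dyadic_code r)",
        OF R \<open>r0 \<in> R\<close> \<open>l r0 \<noteq> 0\<close> infinite_range_dyadic_code finite_range_dyadic_code_Int]
    unfolding d_def mark_def by blast
  ultimately show False
    using weighted_sum_not_null by blast
qed

lemma dim_ge_continuum: "dim_ge_continuum scale V"
proof (rule dim_ge_continuum_if_independent_family)
  show "range family \<subseteq> V"
    using family by blast
  show "inj family" and "independent (range family)"
    using independent_family[of family] family_independent by blast+
qed (rule subspace_V)

end

theorem (in complete_q_normed) dim_ge_continuum_if_independent_seq:
  fixes z :: "nat \<Rightarrow> 'v"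
  assumes "\<And>m. z m \<in> V" "\<And>m. z m \<notin> span (z ` {..<m})" "\<And>m. nv (z m) \<le> 1"
  shows "dim_ge_continuum scale V"
proof -
  interpret independent_seq_in_complete_q_normed scale q V nv z
    by unfold_locales (fact assms)+
  show ?thesis
    by (rule dim_ge_continuum)
qed

section \<open>Spreading spaces\<close>

lemma vector_space_seq_scale:
  assumes "vector_space s"
  shows "vector_space (seq_scale s)"
proof -
  interpret vector_space s by fact
  show ?thesis
    by unfold_locales (auto simp: seq_scale_def fun_eq_iff scale_right_distrib scale_left_distrib)
qed

lemma spread_apply:
  assumes "strict_mono g"
  shows "spread g a (g i) = a i"
proof -
  have "(THE j. g j = g i) = i"
    using strict_mono_eq[OF assms] by auto
  then show ?thesis by (auto simp: spread_def)
qed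

lemma spread_outside_range: "k \<notin> range g \<Longrightarrow> spread g a k = 0"
  by (auto simp: spread_def)

definition row_copy :: "(nat \<Rightarrow> 'w::zero) \<Rightarrow> nat \<Rightarrow> nat \<Rightarrow> 'w" where
  "row_copy a m = spread (\<lambda>i. prod_encode (m, i)) a"

lemma strict_mono_prod_encode_row: "strict_mono (\<lambda>i. prod_encode (m, i))"
  by (rule strict_mono_Suc_iff[THEN iffD2]) (simp add: prod_encode_def)

lemma row_copy_on_row: "row_copy a m (prod_encode (m, i)) = a i"
  by (simp add: row_copy_def spread_apply[OF strict_mono_prod_encode_row])

lemma row_copy_off_row: "m' \<noteq> m \<Longrightarrow> row_copy a m' (prod_encode (m, i)) = 0"
  by (auto simp: row_copy_def intro!: spread_outside_range)

lemma row_copy_notin_span: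
  assumes "vector_space s" and "a k \<noteq> 0"
  shows "row_copy a m \<notin> module.span (seq_scale s) (row_copy a ` {..<m})"
proof
  interpret vector_space s by fact
  interpret W: vector_space "seq_scale s" using vector_space_seq_scale assms(1) .
  let ?H = "{x. x (prod_encode (m, k)) = 0}"
  have "W.subspace ?H"
    by (auto simp: W.subspace_def seq_scale_def)
  moreover have "row_copy a ` {..<m} \<subseteq> ?H"
    by (auto simp: row_copy_off_row)
  ultimately have "W.span (row_copy a ` {..<m}) \<subseteq> ?H"
    by (rule W.span_minimal[rotated])
  moreover assume "row_copy a m \<in> W.span (row_copy a ` {..<m})"
  ultimately show False
    using assms(2) by (auto simp: row_copy_on_row)
qed

theorem dim_ge_continuum_spreading_q_space:
  fixes s :: "'k::{real_normed_field,heine_borel} \<Rightarrow> 'w::ab_group_add \<Rightarrow> 'w"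
  assumes "vector_space s" "0 < q" "spreading_q_space s q V nv" "V \<noteq> {0}"
  shows "dim_ge_continuum (seq_scale s) V"
proof -
  interpret complete_q_normed "seq_scale s" q V nv
    using assms by (intro complete_q_normed.intro complete_q_normed_axioms.intro vector_space_seq_scale)
      (auto simp: spreading_q_space_def)
  obtain b where "b \<in> V" "b \<noteq> 0"
    using assms(4) subspace_0[OF subspace_V] by blast
  define a where "a = seq_scale s (of_real (inverse (nv b))) b"
  have "a \<in> V"
    by (simp add: a_def V_scale \<open>b \<in> V\<close>)
  have "nv a = 1"
    using nv_scale[OF \<open>b \<in> V\<close>] nv_eq_0_iff[OF \<open>b \<in> V\<close>] nv_nonneg[OF \<open>b \<in> V\<close>] \<open>b \<noteq> 0\<close>
    by (simp add: a_def norm_inverse)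
  then obtain k where "a k \<noteq> 0"
    using nv_eq_0_iff[OF \<open>a \<in> V\<close>] by fastforce
  have copy: "row_copy a m \<in> V \<and> nv (row_copy a m) \<le> nv a" for m
    using assms(3) \<open>a \<in> V\<close> strict_mono_prod_encode_row
    by (auto simp: spreading_q_space_def row_copy_def)
  show ?thesis
  proof (rule dim_ge_continuum_if_independent_seq)
    show "row_copy a m \<in> V" and "nv (row_copy a m) \<le> 1" for m
      using copy \<open>nv a = 1\<close> by auto
    show "row_copy a m \<notin> span (row_copy a ` {..<m})" for m
      using row_copy_notin_span[of s a k, OF assms(1) \<open>a k \<noteq> 0\<close>] .
  qed
qed

theorem lemma3p1:
  shows "(\<forall>(s :: real \<Rightarrow> 'w::ab_group_add \<Rightarrow> 'w) q V nv.
            vector_space s \<and> 0 < q \<and> q \<le> 1 \<and> spreading_q_space s q V nv \<and> V \<noteq> {0}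
            \<longrightarrow> dim_ge_continuum (seq_scale s) V) \<and>
         (\<forall>(s :: complex \<Rightarrow> 'u::ab_group_add \<Rightarrow> 'u) q V nv.
            vector_space s \<and> 0 < q \<and> q \<le> 1 \<and> spreading_q_space s q V nv \<and> V \<noteq> {0}
            \<longrightarrow> dim_ge_continuum (seq_scale s) V)"
  by (auto intro: dim_ge_continuum_spreading_q_space)

end
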